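(* Let $\mathcal X$ be a barreled topological real vector space, $\sigma$ a symplectic form on $\mathcal X$, $\mathcal X_{\rm bulk}\subset\mathcal X$ a linear subspace, $\mathcal X_{\rm bd}$ a topological real vector space, and $\partial:\mathcal X_{\rm bulk}'\to\mathcal X_{\rm bd}'$ a linear map whose restriction to $\mathcal X'$ is continuous $\mathcal X'\to\mathcal X_{\rm bd}'$. Let $\eta$ be a strictly positive symmetric bilinear form on $\mathcal X$ with $|v_1\cdot\sigma v_2|\le (v_1\cdot\eta v_1)^{1/2}(v_2\cdot\eta v_2)^{1/2}$ for all $v_1,v_2\in\mathcal X$. Assume (Hypothesis 1) the map $\eta:\mathcal X\to\mathcal X'$, $v\mapsto(w\mapsto w\cdot\eta v)$, is continuous; (Hypothesis 2) for every $u\in\mathcal X'$, $\partial u=0$ implies that $u$ vanishes on $\mathcal X_{\rm bulk}$. Let $\mathcal X^{\rm cpl}$ be the completion of $\mathcal X$ w.r.t. the inner product $\eta$, $\sigma^{\rm cpl}$ the continuous extension of $\sigma$ to $\mathcal X^{\rm cpl}$, and define the $C^*$-subalgebras of $\mathrm{CCR}(\mathcal X^{\rm cpl},\sigma^{\rm cpl})$ $$\mathfrak A_{\rm bulk}=\mathrm{CCR}(\mathcal X_{\rm bulk}^{\rm cl},\sigma^{\rm cpl}),\qquad \mathfrak A_{\rm bd}=\mathrm{CCR}(\mathcal X^{\partial}_{\rm bd},\sigma^{\rm cpl}),\quad \mathcal X^{\partial}_{\rm bd}=\big(\{\partial'f:f\in\mathcal X_{\rm bd}\}\big)^{\rm cl},$$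 closures being taken in $\mathcal X^{\rm cpl}$. Then $\mathfrak A_{\rm bd}\supset\mathfrak A_{\rm bulk}$.
   Context: Duals $\mathcal Y'$ carry the weak$^*$ topology; restricting $u\in\mathcal X'$ to $\mathcal X_{\rm bulk}$ regards it as an element of $\mathcal X_{\rm bulk}'$. For $\tilde u\in\mathcal X^{\rm cpl}$, $\eta^{\rm cpl}\tilde u$ denotes the functional $v\mapsto (v\cdot\eta^{\rm cpl}\tilde u)$ on $\mathcal X$ (which lies in $\mathcal X'$ under Hypothesis 1), and for $f\in\mathcal X_{\rm bd}$, $\partial'f\in\mathcal X^{\rm cpl}$ is the unique element with $(\partial'f\cdot\eta^{\rm cpl}\tilde u)=(\partial(\eta^{\rm cpl}\tilde u))(f)$ for all $\tilde u\in\mathcal X^{\rm cpl}$. For a real vector space $\mathcal Y$ with a (pre)symplectic (antisymmetric bilinear) form $\sigma$, the Weyl CCR algebra $\mathrm{CCR}(\mathcal Y,\sigma)$ is the $C^*$-algebra generated by elements $W(v)$, $v\in\mathcal Y$, with $W(v_1)W(v_2)=e^{-\frac{i}{2}v_1\cdot\sigma v_2}W(v_1+v_2)$, $W(v)^*=W(-v)$, $W(0)=1$; for a subspace $\mathcal Z\subset\mathcal Y$, $\mathrm{CCR}(\mathcal Z,\sigma)$ is the $C^*$-subalgebra generated by $W(v)$, $v\in\mathcal Z$. *)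

theory Defs
  imports "HOL-Analysis.Analysis"
begin

definition tvs :: "'x::real_vector topology \<Rightarrow> bool" where
  "tvs T \<longleftrightarrow> topspace T = UNIV
     \<and> continuous_map (prod_topology T T) T (\<lambda>(x, y). x + y)
     \<and> continuous_map (prod_topology euclideanreal T) T (\<lambda>(a, x). a *\<^sub>R x)"

definition barrel :: "'x::real_vector topology \<Rightarrow> 'x set \<Rightarrow> bool" where
  "barrel T B \<longleftrightarrow> closedin T B \<and> convex B
     \<and> (\<forall>x\<in>B. \<forall>a. \<bar>a\<bar> \<le> 1 \<longrightarrow> a *\<^sub>R x \<in> B)
     \<and> (\<forall>x. \<exists>t>0. \<forall>a. \<bar>a\<bar> \<le> t \<longrightarrow> a *\<^sub>R x \<in> B)"

definition barreled :: "'x::real_vector topology \<Rightarrow> bool" where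
  "barreled T \<longleftrightarrow> tvs T \<and>
     (\<forall>B. barrel T B \<longrightarrow> (\<exists>U. openin T U \<and> 0 \<in> U \<and> U \<subseteq> B))"

definition cdual :: "'x::real_vector topology \<Rightarrow> ('x \<Rightarrow> real) set" where
  "cdual T = {u. linear u \<and> continuous_map T euclideanreal u}"

definition wstar :: "'x::real_vector topology \<Rightarrow> ('x \<Rightarrow> real) topology" where
  "wstar T = subtopology (product_topology (\<lambda>_. euclideanreal) UNIV) (cdual T)"

text \<open>Dual of a linear subspace S (with the subspace topology); functionals are represented
  as functions on the whole type vanishing outside S.\<close>
definition sdual :: "'x::real_vector topology \<Rightarrow> 'x set \<Rightarrow> ('x \<Rightarrow> real) set" where
  "sdual T S = {u. (\<forall>x\<in>S. \<forall>y\<in>S. u (x + y) = u x + u y)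
                 \<and> (\<forall>x\<in>S. \<forall>a. u (a *\<^sub>R x) = a * u x)
                 \<and> continuous_map (subtopology T S) euclideanreal u
                 \<and> (\<forall>x. x \<notin> S \<longrightarrow> u x = 0)}"

definition wstar_sub :: "'x::real_vector topology \<Rightarrow> 'x set \<Rightarrow> ('x \<Rightarrow> real) topology" where
  "wstar_sub T S = subtopology (product_topology (\<lambda>_. euclideanreal) UNIV) (sdual T S)"

definition restr :: "'x set \<Rightarrow> ('x \<Rightarrow> real) \<Rightarrow> ('x \<Rightarrow> real)" where
  "restr S u = (\<lambda>x. if x \<in> S then u x else 0)"

text \<open>A C*-algebra encoded as a real Banach algebra with unit, together with an involution
  \<open>star\<close> and a central element \<open>j\<close> playing the role of the imaginary unit
  (so complex scalar multiplication by \<open>a + i b\<close> is \<open>a *R x + b *R (j * x)\<close>).\<close>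
definition cstar_structure :: "('a::{real_normed_algebra_1, banach} \<Rightarrow> 'a) \<Rightarrow> 'a \<Rightarrow> bool" where
  "cstar_structure star j \<longleftrightarrow>
     j * j = - 1 \<and> (\<forall>x. j * x = x * j) \<and> norm j = 1
     \<and> (\<forall>x. star (star x) = x)
     \<and> (\<forall>x y. star (x + y) = star x + star y)
     \<and> (\<forall>x a. star (a *\<^sub>R x) = a *\<^sub>R star x)
     \<and> star j = - j
     \<and> (\<forall>x y. star (x * y) = star y * star x)
     \<and> (\<forall>x. norm (star x * x) = (norm x)\<^sup>2)"

text \<open>Weyl system for the (pre)symplectic form s:
  W(v1) W(v2) = exp(-i/2 s v1 v2) W(v1+v2), W(v)^* = W(-v), W(0) = 1.\<close>
definition weyl_system ::
  "('h::real_vector \<Rightarrow> 'h \<Rightarrow> real) \<Rightarrow> ('a::{real_normed_algebra_1, banach} \<Rightarrow> 'a) \<Rightarrow> 'a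
     \<Rightarrow> ('h \<Rightarrow> 'a) \<Rightarrow> bool" where
  "weyl_system s star j W \<longleftrightarrow> cstar_structure star j
     \<and> W 0 = 1
     \<and> (\<forall>v. star (W v) = W (- v))
     \<and> (\<forall>v w. W v * W w = cos (s v w / 2) *\<^sub>R W (v + w) - sin (s v w / 2) *\<^sub>R (j * W (v + w)))"

definition cstar_generated :: "('a::{real_normed_algebra_1, banach} \<Rightarrow> 'a) \<Rightarrow> 'a \<Rightarrow> 'a set \<Rightarrow> 'a set" where
  "cstar_generated star j G = \<Inter>{B. G \<subseteq> B \<and> closed B \<and> subspace B
       \<and> (\<forall>x\<in>B. \<forall>y\<in>B. x * y \<in> B) \<and> (\<forall>x\<in>B. star x \<in> B) \<and> (\<forall>x\<in>B. j * x \<in> B)}"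

definition CCR_sub :: "('a::{real_normed_algebra_1, banach} \<Rightarrow> 'a) \<Rightarrow> 'a \<Rightarrow> ('h \<Rightarrow> 'a) \<Rightarrow> 'h set \<Rightarrow> 'a set" where
  "CCR_sub star j W Z = cstar_generated star j (W ` Z)"

end

theory Submission
  imports Defs
begin

text \<open>For each \<open>f\<close> in the boundary space, \<open>u \<mapsto> \<partial>(\<langle>\<iota> \<cdot>, u\<rangle> restricted to the bulk)(f)\<close> is a
  continuous linear functional on the completion: barreledness upgrades Hypothesis 1 to continuity
  of the embedding \<open>\<iota>\<close>, and \<open>\<partial>\<close> is weak-star continuous. Its Riesz representer is \<open>\<partial>'f\<close>, and
  these representers form a subspace \<open>D\<close>. If \<open>q\<close> is orthogonal to \<open>D\<close>, then \<open>\<partial>\<close> annihilates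
  the bulk restriction of \<open>\<langle>\<iota> \<cdot>, q\<rangle>\<close>, so by Hypothesis 2 \<open>q\<close> is orthogonal to the image of
  the bulk. Hence \<iota> maps the bulk into the double orthogonal complement of \<open>D\<close>, its closure,
  and the generated CCR subalgebras are monotone in the generating set.\<close>

lemma subspace_closure:
  fixes S :: "'a::real_normed_vector set"
  assumes "subspace S"
  shows "subspace (closure S)"
  unfolding subspace_def
proof (intro conjI ballI allI)
  show "0 \<in> closure S"
    using assms closure_subset subspace_0 by blast
next
  fix x y assume "x \<in> closure S" "y \<in> closure S"
  then obtain a b where a: "\<forall>n. a n \<in> S" "a \<longlonglongrightarrow> x" and b: "\<forall>n. b n \<in> S" "b \<longlonglongrightarrow> y"
    by (meson closure_sequential)
  have "\<forall>n. a n + b n \<in> S"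
    using a b assms by (simp add: subspace_add)
  moreover have "(\<lambda>n. a n + b n) \<longlonglongrightarrow> x + y"
    using a b by (intro tendsto_add)
  ultimately show "x + y \<in> closure S"
    by (meson closure_sequential)
next
  fix c x assume "x \<in> closure S"
  then obtain a where a: "\<forall>n. a n \<in> S" "a \<longlonglongrightarrow> x"
    by (meson closure_sequential)
  have "\<forall>n. c *\<^sub>R a n \<in> S"
    using a assms by (simp add: subspace_scale)
  moreover have "(\<lambda>n. c *\<^sub>R a n) \<longlonglongrightarrow> c *\<^sub>R x"
    using a by (intro tendsto_scaleR) auto
  ultimately show "c *\<^sub>R x \<in> closure S"
    by (meson closure_sequential)
qed

lemma parallelogram_law:
  fixes u v :: "'a::real_inner"
  shows "(norm (v - u))\<^sup>2 = 2 * (norm u)\<^sup>2 + 2 * (norm v)\<^sup>2 - 4 * (norm ((1/2) *\<^sub>R (u + v)))\<^sup>2"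
  unfolding power2_norm_eq_inner
  by (simp add: inner_diff_left inner_diff_right inner_add_left inner_add_right inner_commute
      field_simps)

lemma convex_near_minimizers_close:
  fixes S :: "'a::real_inner set"
  assumes "convex S" "x \<in> S" "y \<in> S" and d: "\<And>z. z \<in> S \<Longrightarrow> d \<le> (norm (a - z))\<^sup>2"
  shows "(norm (x - y))\<^sup>2 \<le> 2 * (norm (a - x))\<^sup>2 + 2 * (norm (a - y))\<^sup>2 - 4 * d"
proof -
  have "(1/2) *\<^sub>R x + (1/2) *\<^sub>R y \<in> S"
    using assms(1-3) by (intro convexD) auto
  then have "d \<le> (norm (a - ((1/2) *\<^sub>R x + (1/2) *\<^sub>R y)))\<^sup>2"
    by (rule d)
  moreover have "(norm (x - y))\<^sup>2 = 2 * (norm (a - x))\<^sup>2 + 2 * (norm (a - y))\<^sup>2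
      - 4 * (norm (a - ((1/2) *\<^sub>R x + (1/2) *\<^sub>R y)))\<^sup>2"
  proof -
    have "a - ((1/2) *\<^sub>R x + (1/2) *\<^sub>R y) = (1/2) *\<^sub>R ((a - x) + (a - y))"
      "x - y = (a - y) - (a - x)"
      by (simp_all add: algebra_simps) (simp flip: scaleR_add_left)
    then show ?thesis
      by (simp only:) (rule parallelogram_law)
  qed
  ultimately show ?thesis
    by linarith
qed

lemma Cauchy_if_norm_diff_le_inverse:
  fixes y :: "nat \<Rightarrow> 'a::real_normed_vector"
  assumes le: "\<And>m n. (norm (y m - y n))\<^sup>2 \<le> 2 * inverse (real (Suc m)) + 2 * inverse (real (Suc n))"
  shows "Cauchy y"
proof (rule metric_CauchyI)
  fix e :: real assume e: "e > 0"
  obtain N where N: "inverse (real (Suc N)) < e\<^sup>2 / 4"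
    using e reals_Archimedean by (metis divide_pos_pos zero_less_numeral zero_less_power)
  have "dist (y m) (y n) < e" if "m \<ge> N" "n \<ge> N" for m n
  proof -
    have "inverse (real (Suc m)) \<le> inverse (real (Suc N))"
      "inverse (real (Suc n)) \<le> inverse (real (Suc N))"
      using that by (simp_all add: le_imp_inverse_le)
    with le[of m n] N have "(norm (y m - y n))\<^sup>2 < e\<^sup>2"
      by linarith
    then show ?thesis
      using e by (simp add: dist_norm power_less_imp_less_base)
  qed
  then show "\<exists>M. \<forall>m\<ge>M. \<forall>n\<ge>M. dist (y m) (y n) < e"
    by blast
qed

lemma closed_convex_closest_point_exists:
  fixes S :: "'h::{real_inner,complete_space} set"
  assumes "closed S" "convex S" "S \<noteq> {}"
  obtains p where "p \<in> S" "\<forall>z\<in>S. dist a p \<le> dist a z"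
proof -
  define d where "d = (INF y\<in>S. (norm (a - y))\<^sup>2)"
  have bdd: "bdd_below ((\<lambda>y. (norm (a - y))\<^sup>2) ` S)"
    by (rule bdd_belowI[of _ 0]) auto
  have d_le: "d \<le> (norm (a - y))\<^sup>2" if "y \<in> S" for y
    unfolding d_def using bdd that by (rule cINF_lower)
  have "\<exists>y\<in>S. (norm (a - y))\<^sup>2 < d + inverse (real (Suc n))" for n
    using cINF_less_iff[OF _ bdd, of "d + inverse (real (Suc n))"] assms(3) by (simp add: d_def)
  then obtain y where yS: "\<forall>n. y n \<in> S"
    and y_d: "\<forall>n. (norm (a - y n))\<^sup>2 < d + inverse (real (Suc n))"
    by metis
  have "(norm (y m - y n))\<^sup>2 \<le> 2 * inverse (real (Suc m)) + 2 * inverse (real (Suc n))" for m n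
    using convex_near_minimizers_close[OF assms(2) yS[rule_format, of m] yS[rule_format, of n] d_le]
      y_d[rule_format, of m] y_d[rule_format, of n] by linarith
  then have "Cauchy y"
    by (rule Cauchy_if_norm_diff_le_inverse)
  then obtain p where yp: "y \<longlonglongrightarrow> p"
    using Cauchy_convergent_iff convergent_def by blast
  have "(\<lambda>n. (norm (a - y n))\<^sup>2) \<longlonglongrightarrow> (norm (a - p))\<^sup>2"
    by (intro tendsto_intros yp)
  moreover have "(\<lambda>n. d + inverse (real (Suc n))) \<longlonglongrightarrow> d + 0"
    by (intro tendsto_intros LIMSEQ_inverse_real_of_nat)
  ultimately have "(norm (a - p))\<^sup>2 \<le> d + 0"
    using y_d by (intro LIMSEQ_le) (auto intro: less_imp_le)
  then have "dist a p \<le> dist a z" if "z \<in> S" for z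
    using d_le[OF that] by (simp add: dist_norm power2_le_imp_le)
  moreover have "p \<in> S"
    using assms(1) yS yp closed_sequentially by blast
  ultimately show thesis
    using that by blast
qed

lemma closed_subspace_orthogonal_projection:
  fixes M :: "'h::{real_inner,complete_space} set"
  assumes "closed M" "subspace M"
  obtains p where "p \<in> M" "\<forall>m\<in>M. inner (a - p) m = 0"
proof -
  obtain p where p: "p \<in> M" "\<forall>z\<in>M. dist a p \<le> dist a z"
    using closed_convex_closest_point_exists[OF assms(1) subspace_imp_convex[OF assms(2)]]
      assms(2) subspace_0 by blast
  have "inner (a - p) m = 0" if "m \<in> M" for m
  proof -
    have "p + m \<in> M" "p - m \<in> M"
      using assms(2) p(1) that by (auto simp: subspace_add subspace_diff)
    then have "inner (a - p) ((p + m) - p) \<le> 0" "inner (a - p) ((p - m) - p) \<le> 0"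
      using any_closest_point_dot[OF subspace_imp_convex[OF assms(2)] assms(1) p(1) _ p(2)]
      by blast+
    then show ?thesis
      by simp
  qed
  with p(1) that show thesis
    by blast
qed

lemma mem_closed_subspace_if_orthogonal_to_complement:
  fixes M :: "'h::{real_inner,complete_space} set"
  assumes "closed M" "subspace M" and orth: "\<And>q. \<forall>m\<in>M. inner m q = 0 \<Longrightarrow> inner a q = 0"
  shows "a \<in> M"
proof -
  obtain p where p: "p \<in> M" "\<forall>m\<in>M. inner (a - p) m = 0"
    using closed_subspace_orthogonal_projection[OF assms(1,2)] by blast
  have "\<forall>m\<in>M. inner m (a - p) = 0"
    using p(2) by (simp add: inner_commute)
  then have "inner a (a - p) = 0" "inner p (a - p) = 0"
    using orth p(1) by auto
  then have "inner (a - p) (a - p) = 0"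
    by (simp add: inner_diff_left)
  with p(1) show ?thesis
    by simp
qed

lemma Riesz_representation:
  fixes \<psi> :: "'h::{real_inner,complete_space} \<Rightarrow> real"
  assumes lin: "linear \<psi>" and cont: "continuous_on UNIV \<psi>"
  obtains h where "\<forall>u. \<psi> u = inner h u"
proof (cases "\<forall>u. \<psi> u = 0")
  case True
  with that show thesis
    by (metis inner_zero_left)
next
  case False
  then obtain a where a: "\<psi> a \<noteq> 0"
    by blast
  define K where "K = {u. \<psi> u = 0}"
  have "closed K"
    unfolding K_def using cont by (intro closed_Collect_eq continuous_on_const) auto
  moreover have "subspace K"
    unfolding K_def subspace_def using lin by (simp add: linear_add linear_scale linear_0)
  ultimately obtain p where "p \<in> K" and "\<forall>m\<in>K. inner (a - p) m = 0"
    using closed_subspace_orthogonal_projection by blast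
  define z where "z = a - p"
  have orth: "\<forall>m\<in>K. inner z m = 0"
    using \<open>\<forall>m\<in>K. inner (a - p) m = 0\<close> by (simp add: z_def)
  have "\<psi> z = \<psi> a"
    using \<open>p \<in> K\<close> lin by (simp add: z_def K_def linear_diff)
  have "\<psi> u = inner ((\<psi> z / inner z z) *\<^sub>R z) u" for u
  proof -
    have "u - (\<psi> u / \<psi> z) *\<^sub>R z \<in> K"
      using \<open>\<psi> z = \<psi> a\<close> a lin by (simp add: K_def linear_diff linear_scale)
    then have "inner z (u - (\<psi> u / \<psi> z) *\<^sub>R z) = 0"
      using orth by blast
    then have "inner z u = (\<psi> u / \<psi> z) * inner z z"
      by (simp add: inner_diff_right)
    moreover have "inner z z \<noteq> 0"
      using a \<open>\<psi> z = \<psi> a\<close> lin by (metis inner_eq_zero_iff linear_0)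
    ultimately show ?thesis
      using a \<open>\<psi> z = \<psi> a\<close> by (simp add: field_simps)
  qed
  with that show thesis
    by blast
qed

lemma mem_closure_Riesz_representers:
  fixes \<Psi> :: "'b::real_vector \<Rightarrow> 'h::{real_inner,complete_space} \<Rightarrow> real"
  assumes lin: "\<And>f. linear (\<Psi> f)" and cont: "\<And>f. continuous_on UNIV (\<Psi> f)"
    and lin_param: "\<And>u. linear (\<lambda>f. \<Psi> f u)"
    and orth: "\<And>q. (\<And>f. \<Psi> f q = 0) \<Longrightarrow> inner a q = 0"
  shows "a \<in> closure {h. \<exists>f. \<forall>u. inner h u = \<Psi> f u}"
proof -
  define D where "D = {h. \<exists>f. \<forall>u. inner h u = \<Psi> f u}"
  have D_iff: "h \<in> D \<longleftrightarrow> (\<exists>f. \<forall>u. inner h u = \<Psi> f u)" for h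
    by (simp add: D_def)
  have "subspace D"
    unfolding subspace_def
  proof (intro conjI ballI allI)
    have "\<forall>u. inner 0 u = \<Psi> 0 u"
      by (simp add: linear_0[OF lin_param])
    then show "0 \<in> D"
      unfolding D_iff by (rule exI)
  next
    fix x y assume "x \<in> D" "y \<in> D"
    then obtain f g where "\<forall>u. inner x u = \<Psi> f u" "\<forall>u. inner y u = \<Psi> g u"
      unfolding D_iff by (elim exE)
    then have "\<forall>u. inner (x + y) u = \<Psi> (f + g) u"
      by (simp add: inner_add_left linear_add[OF lin_param])
    then show "x + y \<in> D"
      unfolding D_iff by (rule exI)
  next
    fix c x assume "x \<in> D"
    then obtain f where "\<forall>u. inner x u = \<Psi> f u"
      unfolding D_iff by (elim exE)
    then have "\<forall>u. inner (c *\<^sub>R x) u = \<Psi> (c *\<^sub>R f) u"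
      by (simp add: linear_scale[OF lin_param])
    then show "c *\<^sub>R x \<in> D"
      unfolding D_iff by (rule exI)
  qed
  have "inner a q = 0" if q: "\<forall>m\<in>closure D. inner m q = 0" for q
  proof (rule orth)
    fix f
    obtain h where h: "\<forall>u. \<Psi> f u = inner h u"
      using Riesz_representation[OF lin cont] .
    then have "h \<in> D"
      unfolding D_iff by (intro exI[of _ f]) simp
    then have "inner h q = 0"
      using q closure_subset by blast
    with h show "\<Psi> f q = 0"
      by simp
  qed
  then show ?thesis
    unfolding D_def[symmetric]
    by (rule mem_closed_subspace_if_orthogonal_to_complement[OF closed_closure
          subspace_closure[OF \<open>subspace D\<close>]])
qed

lemma tvs_continuous_map_add_const:
  assumes "tvs T"
  shows "continuous_map T T (\<lambda>v. v + a)"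
proof -
  have "continuous_map T (prod_topology T T) (\<lambda>v. (v, a))"
    using assms by (intro continuous_map_pairedI) (auto simp: tvs_def)
  moreover have "continuous_map (prod_topology T T) T (\<lambda>(x, y). x + y)"
    using assms by (simp add: tvs_def)
  ultimately have "continuous_map T T ((\<lambda>(x, y). x + y) \<circ> (\<lambda>v. (v, a)))"
    by (rule continuous_map_compose)
  then show ?thesis
    by (simp add: o_def)
qed

lemma tvs_continuous_map_scaleR:
  assumes "tvs T"
  shows "continuous_map T T (\<lambda>v. c *\<^sub>R v)"
proof -
  have "continuous_map T (prod_topology euclideanreal T) (\<lambda>v. (c, v))"
    using assms by (intro continuous_map_pairedI) (auto simp: tvs_def)
  moreover have "continuous_map (prod_topology euclideanreal T) T (\<lambda>(a, x). a *\<^sub>R x)"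
    using assms by (simp add: tvs_def)
  ultimately have "continuous_map T T ((\<lambda>(a, x). a *\<^sub>R x) \<circ> (\<lambda>v. (c, v)))"
    by (rule continuous_map_compose)
  then show ?thesis
    by (simp add: o_def)
qed

lemma barrel_linear_preimage_cball:
  fixes f :: "'x::real_vector \<Rightarrow> 'y::real_normed_vector"
  assumes "linear f" "closedin T {v. norm (f v) \<le> 1}"
  shows "barrel T {v. norm (f v) \<le> 1}"
proof -
  have "convex {v. norm (f v) \<le> 1}"
    using convex_linear_vimage[OF assms(1) convex_cball, of 0 1] by (simp add: vimage_def)
  moreover have "\<exists>t>0. \<forall>a. \<bar>a\<bar> \<le> t \<longrightarrow> norm (f (a *\<^sub>R x)) \<le> 1" for x
  proof (intro exI conjI allI impI)
    have pos: "norm (f x) + 1 > 0"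
      by (simp add: add_nonneg_pos)
    then show "1 / (norm (f x) + 1) > 0"
      by simp
    fix a :: real assume "\<bar>a\<bar> \<le> 1 / (norm (f x) + 1)"
    then have "\<bar>a\<bar> * norm (f x) \<le> 1 / (norm (f x) + 1) * norm (f x)"
      by (rule mult_right_mono) simp
    also have "\<dots> \<le> 1"
      using pos by (simp add: field_simps)
    finally show "norm (f (a *\<^sub>R x)) \<le> 1"
      using assms(1) by (simp add: linear_scale)
  qed
  ultimately show ?thesis
    using assms by (auto simp: barrel_def linear_scale mult_le_one)
qed

lemma barreled_linear_continuous:
  fixes f :: "'x::real_vector \<Rightarrow> 'y::real_normed_vector"
  assumes bar: "barreled T" and lin: "linear f" and closed: "closedin T {v. norm (f v) \<le> 1}"
  shows "continuous_map T euclidean f"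
proof -
  have tvs: "tvs T" and top: "topspace T = UNIV"
    using bar by (auto simp: barreled_def tvs_def)
  obtain U where U: "openin T U" "0 \<in> U" "U \<subseteq> {v. norm (f v) \<le> 1}"
    using bar barrel_linear_preimage_cball[OF lin closed] by (auto simp: barreled_def)
  text \<open>The translated and dilated copy \<open>x + (e/2) U\<close> of the neighbourhood \<open>U\<close> is mapped into the
    \<open>e\<close>-ball around \<open>f x\<close>.\<close>
  have "\<exists>N. openin T N \<and> x \<in> N \<and> (\<forall>y\<in>N. dist (f x) (f y) < e)" if e: "e > 0" for x e
  proof (intro exI conjI ballI)
    define g where "g = (\<lambda>v. (2 / e) *\<^sub>R (v - x))"
    have "continuous_map T T g"
      using continuous_map_compose[OF tvs_continuous_map_add_const[OF tvs, of "- x"]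
          tvs_continuous_map_scaleR[OF tvs, of "2 / e"]]
      by (simp add: o_def g_def)
    then show "openin T (g -` U \<inter> topspace T)"
      using U(1) by blast
    show "x \<in> g -` U \<inter> topspace T"
      using U(2) top by (simp add: g_def)
    fix y assume "y \<in> g -` U \<inter> topspace T"
    then have "norm (f ((2 / e) *\<^sub>R (y - x))) \<le> 1"
      using U(3) by (auto simp: g_def)
    then have "norm ((2 / e) *\<^sub>R (f y - f x)) \<le> 1"
      using lin by (simp only: linear_scale linear_diff)
    then have "2 / e * norm (f y - f x) \<le> 1"
      using e by (simp only: norm_scaleR) simp
    then have "norm (f y - f x) \<le> e / 2"
      using e by (simp add: field_simps)
    then show "dist (f x) (f y) < e"
      using e by (simp add: dist_norm norm_minus_commute)
  qed
  then show ?thesis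
    unfolding Met_TC.continuous_map_to_metric[simplified] by blast
qed

lemma closedin_inner_preimage_cball:
  fixes f :: "'x \<Rightarrow> 'h::real_inner"
  assumes "topspace T = UNIV" and cont: "\<And>w. continuous_map T euclideanreal (\<lambda>v. inner (f v) (f w))"
  shows "closedin T {v. norm (f v) \<le> 1}"
proof -
  text \<open>By Cauchy-Schwarz, \<open>norm (f v) \<le> 1\<close> iff \<open>inner (f v) (f w) \<le> norm (f w)\<close> for all \<open>w\<close>.\<close>
  have "{v. norm (f v) \<le> 1} = (\<Inter>w. {v. inner (f v) (f w) \<le> norm (f w)})"
  proof (intro set_eqI iffI)
    fix v assume "v \<in> {v. norm (f v) \<le> 1}"
    then have "inner (f v) (f w) \<le> norm (f w)" for w
      using norm_cauchy_schwarz[of "f v" "f w"] mult_left_le_one_le[of "norm (f w)" "norm (f v)"]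
      by simp
    then show "v \<in> (\<Inter>w. {v. inner (f v) (f w) \<le> norm (f w)})"
      by blast
  next
    fix v assume "v \<in> (\<Inter>w. {v. inner (f v) (f w) \<le> norm (f w)})"
    then have "norm (f v) * norm (f v) \<le> norm (f v)"
      by (simp flip: power2_eq_square add: power2_norm_eq_inner)
    then show "v \<in> {v. norm (f v) \<le> 1}"
      by (cases "norm (f v) = 0") (auto simp: mult_le_cancel_right1)
  qed
  moreover have "closedin T {v. inner (f v) (f w) \<le> norm (f w)}" for w
    using cont[of w] assms(1) unfolding continuous_map_upper_lower_semicontinuous_le by simp
  ultimately show ?thesis
    by (auto intro!: closedin_Inter)
qed

lemma barreled_inner_in_cdual:
  fixes f :: "'x::real_vector \<Rightarrow> 'h::real_inner"
  assumes bar: "barreled T" and lin: "linear f"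
    and cont: "\<And>w. continuous_map T euclideanreal (\<lambda>v. inner (f v) (f w))"
  shows "(\<lambda>v. inner (f v) u) \<in> cdual T"
proof -
  have "topspace T = UNIV"
    using bar by (simp add: barreled_def tvs_def)
  then have "closedin T {v. norm (f v) \<le> 1}"
    using cont by (rule closedin_inner_preimage_cball)
  then have "continuous_map T euclidean f"
    by (rule barreled_linear_continuous[OF bar lin])
  moreover have "continuous_map euclidean euclideanreal (\<lambda>h. inner h u)"
    by (simp add: continuous_on_inner continuous_on_id continuous_on_const)
  ultimately have "continuous_map T euclideanreal ((\<lambda>h. inner h u) \<circ> f)"
    by (rule continuous_map_compose)
  moreover have "linear (\<lambda>v. inner (f v) u)"
    using lin by (intro linearI) (simp_all add: linear_add linear_scale inner_add_left)
  ultimately show ?thesis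
    by (simp add: cdual_def o_def)
qed

lemma restr_in_sdual:
  assumes "subspace S" "u \<in> cdual T"
  shows "restr S u \<in> sdual T S"
proof -
  have "continuous_map (subtopology T S) euclideanreal (restr S u)"
    using assms(2) by (auto simp: cdual_def restr_def
        intro: continuous_map_eq[OF continuous_map_from_subtopology])
  then show ?thesis
    using assms
    by (auto simp: sdual_def restr_def cdual_def subspace_add subspace_scale linear_add linear_scale)
qed

lemma continuous_map_wstar_eval:
  "continuous_map (wstar T) euclideanreal (\<lambda>g. g x)"
  unfolding wstar_def
  by (rule continuous_map_from_subtopology[OF continuous_map_product_projection]) simp

lemma continuous_map_into_wstar:
  assumes "\<And>u. u \<in> topspace S \<Longrightarrow> F u \<in> cdual T"
    and "\<And>v. continuous_map S euclideanreal (\<lambda>u. F u v)"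
  shows "continuous_map S (wstar T) F"
  unfolding wstar_def continuous_map_in_subtopology continuous_map_componentwise_UNIV
  using assms by auto

lemma linear_bdry_restr:
  fixes L :: "'h::real_vector \<Rightarrow> 'x::real_vector \<Rightarrow> real"
  assumes "subspace S" and L_cdual: "\<And>u. L u \<in> cdual T" and L_linear: "\<And>x. linear (\<lambda>u. L u x)"
    and bdry_add: "\<forall>u\<in>sdual T S. \<forall>u'\<in>sdual T S. bdry (\<lambda>x. u x + u' x) = (\<lambda>f. bdry u f + bdry u' f)"
    and bdry_scale: "\<forall>u\<in>sdual T S. \<forall>a. bdry (\<lambda>x. a * u x) = (\<lambda>f. a * bdry u f)"
  shows "linear (\<lambda>u. bdry (restr S (L u)) f)"
proof (rule linearI)
  fix u u' :: 'h and c :: real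
  have R_sdual: "restr S (L w) \<in> sdual T S" for w
    by (rule restr_in_sdual[OF \<open>subspace S\<close> L_cdual])
  have "L (u + u') x = L u x + L u' x" "L (c *\<^sub>R u) x = c * L u x" for x
    using linear_add[OF L_linear] linear_scale[OF L_linear] by simp_all
  then have "restr S (L (u + u')) = (\<lambda>x. restr S (L u) x + restr S (L u') x)"
    "restr S (L (c *\<^sub>R u)) = (\<lambda>x. c * restr S (L u) x)"
    by (auto simp: restr_def)
  then show "bdry (restr S (L (u + u'))) f = bdry (restr S (L u)) f + bdry (restr S (L u')) f"
    "bdry (restr S (L (c *\<^sub>R u))) f = c *\<^sub>R bdry (restr S (L u)) f"
    using bdry_add bdry_scale R_sdual by simp_all
qed

lemma continuous_on_bdry_restr:
  fixes L :: "'h::topological_space \<Rightarrow> 'x::real_vector \<Rightarrow> real"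
  assumes "\<And>u. L u \<in> cdual T" "\<And>x. continuous_on UNIV (\<lambda>u. L u x)"
    and bdry_cont: "continuous_map (wstar T) (wstar Tbd) (\<lambda>u. bdry (restr S u))"
  shows "continuous_on UNIV (\<lambda>u. bdry (restr S (L u)) f)"
proof -
  have "continuous_map euclidean (wstar T) L"
    using assms(1,2) by (intro continuous_map_into_wstar) simp_all
  from continuous_map_compose[OF this bdry_cont]
  have "continuous_map euclidean (wstar Tbd) (\<lambda>u. bdry (restr S (L u)))"
    by (simp add: o_def)
  from continuous_map_compose[OF this continuous_map_wstar_eval]
  show ?thesis
    by (simp add: o_def)
qed

lemma CCR_sub_mono:
  assumes "A \<subseteq> B"
  shows "CCR_sub star j W A \<subseteq> CCR_sub star j W B"
  unfolding CCR_sub_def cstar_generated_def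
  by (rule Inter_anti_mono) (use assms in \<open>auto dest: image_mono[of _ _ W]\<close>)

theorem theorem2p2:
  fixes TX :: "'x::real_vector topology"
    and \<sigma> :: "'x \<Rightarrow> 'x \<Rightarrow> real"
    and Xbulk :: "'x set"
    and Tbd :: "'b::real_vector topology"
    and bdry :: "('x \<Rightarrow> real) \<Rightarrow> ('b \<Rightarrow> real)"
    and \<eta> :: "'x \<Rightarrow> 'x \<Rightarrow> real"
    and \<iota> :: "'x \<Rightarrow> 'h::{real_inner, complete_space}"
    and \<sigma>c :: "'h \<Rightarrow> 'h \<Rightarrow> real"
    and star :: "'a::{real_normed_algebra_1, banach} \<Rightarrow> 'a"
    and j :: 'a
    and W :: "'h \<Rightarrow> 'a"
  assumes barreled: "barreled TX"
    and sigma_bilin: "\<forall>v. linear (\<sigma> v)" "\<forall>w. linear (\<lambda>v. \<sigma> v w)"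
    and sigma_antisym: "\<forall>v w. \<sigma> v w = - \<sigma> w v"
    and sigma_nondeg: "\<forall>v. (\<forall>w. \<sigma> v w = 0) \<longrightarrow> v = 0"
    and bulk_subspace: "subspace Xbulk"
    and bd_tvs: "tvs Tbd"
    and bdry_maps: "\<forall>u\<in>sdual TX Xbulk. bdry u \<in> cdual Tbd"
    and bdry_add: "\<forall>u\<in>sdual TX Xbulk. \<forall>u'\<in>sdual TX Xbulk.
                     bdry (\<lambda>x. u x + u' x) = (\<lambda>f. bdry u f + bdry u' f)"
    and bdry_scale: "\<forall>u\<in>sdual TX Xbulk. \<forall>a. bdry (\<lambda>x. a * u x) = (\<lambda>f. a * bdry u f)"
    and bdry_cont: "continuous_map (wstar TX) (wstar Tbd) (\<lambda>u. bdry (restr Xbulk u))"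
    and eta_bilin: "\<forall>v. linear (\<eta> v)" "\<forall>w. linear (\<lambda>v. \<eta> v w)"
    and eta_sym: "\<forall>v w. \<eta> v w = \<eta> w v"
    and eta_pos: "\<forall>v. v \<noteq> 0 \<longrightarrow> \<eta> v v > 0"
    and sigma_bound: "\<forall>v w. \<bar>\<sigma> v w\<bar> \<le> sqrt (\<eta> v v) * sqrt (\<eta> w w)"
    and hyp1: "\<forall>v. (\<lambda>w. \<eta> w v) \<in> cdual TX"
              "continuous_map TX (wstar TX) (\<lambda>v. \<lambda>w. \<eta> w v)"
    and hyp2: "\<forall>u\<in>cdual TX. bdry (restr Xbulk u) = (\<lambda>_. 0) \<longrightarrow> (\<forall>x\<in>Xbulk. u x = 0)"
    and cpl_linear: "linear \<iota>"
    and cpl_inner: "\<forall>v w. inner (\<iota> v) (\<iota> w) = \<eta> v w"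
    and cpl_dense: "closure (range \<iota>) = UNIV"
    and sigc_bilin: "bounded_bilinear \<sigma>c"
    and sigc_ext: "\<forall>v w. \<sigma>c (\<iota> v) (\<iota> w) = \<sigma> v w"
    and weyl: "weyl_system \<sigma>c star j W"
  shows "CCR_sub star j W (closure (\<iota> ` Xbulk))
         \<subseteq> CCR_sub star j W
              (closure {h. \<exists>f. \<forall>u. inner h u = bdry (restr Xbulk (\<lambda>v. inner (\<iota> v) u)) f})"
proof -
  define L where "L u = (\<lambda>v. inner (\<iota> v) u)" for u
  define \<Psi> where "\<Psi> f = (\<lambda>u. bdry (restr Xbulk (L u)) f)" for f
  have "continuous_map TX euclideanreal (\<lambda>v. \<eta> v w)" for w
    using hyp1(1) by (simp add: cdual_def)
  then have L_cdual: "L u \<in> cdual TX" for u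
    unfolding L_def by (intro barreled_inner_in_cdual[OF barreled cpl_linear]) (simp add: cpl_inner)
  have L_linear: "linear (\<lambda>u. L u x)" for x
    by (simp add: L_def bounded_linear.linear[OF bounded_linear_inner_right])
  have L_continuous: "continuous_on UNIV (\<lambda>u. L u x)" for x
    by (simp add: L_def continuous_on_inner continuous_on_id continuous_on_const)
  have \<Psi>_linear: "linear (\<Psi> f)" for f
    unfolding \<Psi>_def by (rule linear_bdry_restr[OF bulk_subspace L_cdual L_linear bdry_add bdry_scale])
  have \<Psi>_continuous: "continuous_on UNIV (\<Psi> f)" for f
    unfolding \<Psi>_def by (rule continuous_on_bdry_restr[OF L_cdual L_continuous bdry_cont])
  have \<Psi>_linear_param: "linear (\<lambda>f. \<Psi> f u)" for u
    using bdry_maps restr_in_sdual[OF bulk_subspace L_cdual] by (simp add: \<Psi>_def cdual_def)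
  have bulk_orthogonal: "inner (\<iota> x) q = 0" if "x \<in> Xbulk" "\<And>f. \<Psi> f q = 0" for x q
  proof -
    have "bdry (restr Xbulk (L q)) = (\<lambda>_. 0)"
      using that(2) by (simp add: \<Psi>_def fun_eq_iff)
    with hyp2 L_cdual that(1) have "L q x = 0"
      by blast
    then show ?thesis
      by (simp add: L_def)
  qed
  have "\<iota> x \<in> closure {h. \<exists>f. \<forall>u. inner h u = \<Psi> f u}" if "x \<in> Xbulk" for x
    using mem_closure_Riesz_representers[OF \<Psi>_linear \<Psi>_continuous \<Psi>_linear_param
        bulk_orthogonal[OF that]] .
  then have "closure (\<iota> ` Xbulk) \<subseteq> closure {h. \<exists>f. \<forall>u. inner h u = \<Psi> f u}"
    by (intro closure_minimal image_subsetI) simp_all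
  then show ?thesis
    unfolding \<Psi>_def L_def by (rule CCR_sub_mono)
qed

end
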